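(* Let $\mathbb{L}=(p_1,\dots,p_m)$ be a network traffic log, $\mathbb{S}=(q_1,\dots,q_n)$ a signature, and $\epsilon=(\epsilon_1,\dots,\epsilon_{n-1})$ a tolerance vector with all $\epsilon_j>0$. Let $G_{\mathbb{LS}}=(V_{\mathbb{LS}},E_{\mathbb{LS}})$ be the directed graph output by the algorithm sigMatch$(\mathbb{L},\mathbb{S},\epsilon)$ described in the context. Then sigMatch runs in worst-case time $O(m^2 n)$. Furthermore: (a) If $(p_{l[1]},p_{l[2]},\dots,p_{l[n]})$ is an $\epsilon$-valid match of $\mathbb{S}$ in $\mathbb{L}$, then $(v_{l[n],n},v_{l[n-1],n-1},\dots,v_{l[1],1})$ is a directed path in $G_{\mathbb{LS}}$, and $l[1]<l[2]<\cdots<l[n]$. (b) If $(v_{l[n],n},v_{l[n-1],n-1},\dots,v_{l[1],1})$ is a directed path in $G_{\mathbb{LS}}$, then $(p_{l[1]},p_{l[2]},\dots,p_{l[n]})$ is an $\epsilon$-valid match of $\mathbb{S}$ in $\mathbb{L}$, and $l[1]<l[2]<\cdots<l[n]$.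
   Context: A packet $p$ is an 8-tuple whose first field is a real timestamp $p.t$; the remaining 7 fields (device IP, remote server name, remote port, protocol, direction, length, application data) form the base packet $\widehat{p}$ (the tuple with the timestamp deleted). A network traffic log is a sequence of packets $\mathbb{L}=(p_1,\dots,p_m)$ with strictly increasing timestamps. A signature is a sequence of packets $\mathbb{S}=(q_1,\dots,q_n)$ with strictly increasing (relative) timestamps. For $1<j\le n$, $\delta>0$ and $1\le i'<i''\le m$, the pair $(p_{i'},p_{i''})$ is a $\delta$-valid match of $(q_{j-1},q_j)$ if $\widehat{p_{i'}}=\widehat{q_{j-1}}$, $\widehat{p_{i''}}=\widehat{q_j}$, and $|(p_{i''}.t-p_{i'}.t)-(q_j.t-q_{j-1}.t)|\le\delta$. Given a tolerance vector $\epsilon=(\epsilon_1,\dots,\epsilon_{n-1})$ and an increasing sequence of indices $l[1]<\dots<l[n]$ in $\{1,\dots,m\}$, $(p_{l[1]},\dots,p_{l[n]})$ is an $\epsilon$-valid match of $\mathbb{S}$ in $\mathbb{L}$ if $(p_{l[j]},p_{l[j+1]})$ is an $\epsilon_j$-valid match of $(q_j,q_{j+1})$ for every $j=1,\dots,n-1$. Algorithm sigMatch$(\mathbb{L},\mathbb{S},\epsilon)$: initialize $V_{\mathbb{LS}}=E_{\mathbb{LS}}=\emptyset$ (vertices are symbols $v_{i,j}$, $1\le i\le m$, $1\le j\le n$). For $i=1,\dots,m$: if $\widehat{p_i}=\widehat{q_1}$, add $v_{i,1}$ to $V_{\mathbb{LS}}$; then for $j=2,\dots,n$ and for $k=1,\dots,i-1$: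 if $v_{k,j-1}\in V_{\mathbb{LS}}$ and $(p_k,p_i)$ is an $\epsilon_{j-1}$-valid match of $(q_{j-1},q_j)$, add $v_{i,j}$ to $V_{\mathbb{LS}}$ and add the directed edge $(v_{i,j},v_{k,j-1})$ to $E_{\mathbb{LS}}$. Output $G_{\mathbb{LS}}=(V_{\mathbb{LS}},E_{\mathbb{LS}})$. Checking equality of base packets and the time condition is counted as constant time. *)

theory Defs
  imports Complex_Main
begin

text \<open>The base packet type 'b is abstract
  (the 7-tuple of fields); only equality of base packets is used.
  Logs and signatures are 1-indexed functions with an explicit length.\<close>

type_synonym 'b packet = "real \<times> 'b"

definition ts :: "'b packet \<Rightarrow> real" where "ts p = fst p"
definition base :: "'b packet \<Rightarrow> 'b" where "base p = snd p"

definition is_seq :: "(nat \<Rightarrow> 'b packet) \<Rightarrow> nat \<Rightarrow> bool" where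
  "is_seq P len \<longleftrightarrow> (\<forall>i j. 1 \<le> i \<and> i < j \<and> j \<le> len \<longrightarrow> ts (P i) < ts (P j))"

definition delta_valid :: "real \<Rightarrow> 'b packet \<Rightarrow> 'b packet \<Rightarrow> 'b packet \<Rightarrow> 'b packet \<Rightarrow> bool" where
  "delta_valid \<delta> p1 p2 q1 q2 \<longleftrightarrow>
     base p1 = base q1 \<and> base p2 = base q2 \<and>
     \<bar>(ts p2 - ts p1) - (ts q2 - ts q1)\<bar> \<le> \<delta>"

definition pair_valid_match ::
  "(nat \<Rightarrow> 'b packet) \<Rightarrow> nat \<Rightarrow> real \<Rightarrow> nat \<Rightarrow> nat \<Rightarrow> 'b packet \<Rightarrow> 'b packet \<Rightarrow> bool" where
  "pair_valid_match L m \<delta> i1 i2 q1 q2 \<longleftrightarrow>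
     1 \<le> i1 \<and> i1 < i2 \<and> i2 \<le> m \<and> delta_valid \<delta> (L i1) (L i2) q1 q2"

definition eps_valid_match ::
  "(nat \<Rightarrow> 'b packet) \<Rightarrow> nat \<Rightarrow> (nat \<Rightarrow> 'b packet) \<Rightarrow> nat \<Rightarrow> (nat \<Rightarrow> real) \<Rightarrow> (nat \<Rightarrow> nat) \<Rightarrow> bool" where
  "eps_valid_match L m S n eps l \<longleftrightarrow>
     (\<forall>j. 1 \<le> j \<and> j \<le> n \<longrightarrow> 1 \<le> l j \<and> l j \<le> m) \<and>
     (\<forall>j. 1 \<le> j \<and> j < n \<longrightarrow> l j < l (Suc j)) \<and>
     (\<forall>j. 1 \<le> j \<and> j < n \<longrightarrow> pair_valid_match L m (eps j) (l j) (l (Suc j)) (S j) (S (Suc j)))"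

text \<open>The state is
  (V, E, c) where vertices v_{i,j} are pairs (i,j), edges are pairs of vertices and c counts
  the constant-time checks performed (equality of base packets / time condition).\<close>

type_synonym state = "(nat \<times> nat) set \<times> ((nat \<times> nat) \<times> (nat \<times> nat)) set \<times> nat"

definition inner_step ::
  "(nat \<Rightarrow> 'b packet) \<Rightarrow> (nat \<Rightarrow> 'b packet) \<Rightarrow> (nat \<Rightarrow> real) \<Rightarrow> nat \<Rightarrow> nat \<Rightarrow> state \<Rightarrow> nat \<Rightarrow> state" where
  "inner_step L S eps i j st k = (case st of (V, E, c) \<Rightarrow>
     if (k, j - 1) \<in> V \<and> delta_valid (eps (j - 1)) (L k) (L i) (S (j - 1)) (S j)
     then (insert (i, j) V, insert ((i, j), (k, j - 1)) E, Suc c)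
     else (V, E, Suc c))"

definition outer_step ::
  "(nat \<Rightarrow> 'b packet) \<Rightarrow> (nat \<Rightarrow> 'b packet) \<Rightarrow> nat \<Rightarrow> (nat \<Rightarrow> real) \<Rightarrow> state \<Rightarrow> nat \<Rightarrow> state" where
  "outer_step L S n eps st i = (case st of (V, E, c) \<Rightarrow>
     let st1 = (if base (L i) = base (S 1) then insert (i, 1) V else V, E, Suc c)
     in foldl (\<lambda>st' j. foldl (inner_step L S eps i j) st' [1..<i]) st1 [2..<Suc n])"

definition sigMatch_run ::
  "(nat \<Rightarrow> 'b packet) \<Rightarrow> nat \<Rightarrow> (nat \<Rightarrow> 'b packet) \<Rightarrow> nat \<Rightarrow> (nat \<Rightarrow> real) \<Rightarrow> state" where
  "sigMatch_run L m S n eps = foldl (outer_step L S n eps) ({}, {}, 0) [1..<Suc m]"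

definition sigMatch_V where "sigMatch_V L m S n eps = fst (sigMatch_run L m S n eps)"
definition sigMatch_E where "sigMatch_E L m S n eps = fst (snd (sigMatch_run L m S n eps))"
definition sigMatch_cost where "sigMatch_cost L m S n eps = snd (snd (sigMatch_run L m S n eps))"

definition is_dpath :: "'v set \<Rightarrow> ('v \<times> 'v) set \<Rightarrow> 'v list \<Rightarrow> bool" where
  "is_dpath V E xs \<longleftrightarrow> xs \<noteq> [] \<and> set xs \<subseteq> V \<and>
     (\<forall>i. Suc i < length xs \<longrightarrow> (xs ! i, xs ! Suc i) \<in> E)"

definition match_path :: "(nat \<Rightarrow> nat) \<Rightarrow> nat \<Rightarrow> (nat \<times> nat) list" where
  "match_path l n = map (\<lambda>j. (l j, j)) (rev [1..<Suc n])"

end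

theory Submission
  imports Defs
begin

(* sigMatch creates the vertex v_{i,j} exactly when some eps-valid match of (q_1, ..., q_j) ends
   in p_i (the inductive predicate partial_match), and the edge from v_{i,j} to v_{k,j-1} exactly
   when p_k ends such a match of (q_1, ..., q_{j-1}) that (p_k, p_i) extends. Hence the paths
   (v_{l[n],n}, ..., v_{l[1],1}) are precisely the eps-valid matches. Round i performs one check
   for q_1 and (n - 1)(i - 1) checks in its inner loops, so the total cost is
   sum_{i<m} (1 + (n - 1) i) <= m^2 n. *)

abbreviation step_match ::
    "(nat \<Rightarrow> 'b packet) \<Rightarrow> (nat \<Rightarrow> 'b packet) \<Rightarrow> (nat \<Rightarrow> real) \<Rightarrow> nat \<Rightarrow> nat \<Rightarrow> nat \<Rightarrow> bool" where
  "step_match L S eps k i j \<equiv> delta_valid (eps (j - 1)) (L k) (L i) (S (j - 1)) (S j)"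

inductive partial_match ::
    "(nat \<Rightarrow> 'b packet) \<Rightarrow> (nat \<Rightarrow> 'b packet) \<Rightarrow> nat \<Rightarrow> (nat \<Rightarrow> real) \<Rightarrow> nat \<Rightarrow> nat \<Rightarrow> bool"
  for L S n eps where
  start: "1 \<le> i \<Longrightarrow> base (L i) = base (S 1) \<Longrightarrow> partial_match L S n eps i 1"
| extend: "partial_match L S n eps k (j - 1) \<Longrightarrow> k < i \<Longrightarrow> 2 \<le> j \<Longrightarrow> j \<le> n \<Longrightarrow>
    step_match L S eps k i j \<Longrightarrow> partial_match L S n eps i j"

lemma partial_match_pos: "partial_match L S n eps i j \<Longrightarrow> 1 \<le> i"
  by (induction rule: partial_match.induct) auto

lemma foldl_inner_step:
  assumes "1 \<le> j"
  shows "foldl (inner_step L S eps i j) (V, E, c) ks =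
    (if \<exists>k\<in>set ks. (k, j - 1) \<in> V \<and> step_match L S eps k i j then insert (i, j) V else V,
     E \<union> {((i, j), (k, j - 1)) | k. k \<in> set ks \<and> (k, j - 1) \<in> V \<and> step_match L S eps k i j},
     c + length ks)"
proof (induction ks arbitrary: V E c)
  case (Cons k ks)
  show ?case
  proof (cases "(k, j - 1) \<in> V \<and> step_match L S eps k i j")
    case True
    then have "inner_step L S eps i j (V, E, c) k =
        (insert (i, j) V, insert ((i, j), (k, j - 1)) E, Suc c)"
      by (simp add: inner_step_def)
    with True assms show ?thesis
      by (auto simp: Cons.IH)
  next
    case False
    then have "inner_step L S eps i j (V, E, c) k = (V, E, Suc c)"
      by (auto simp: inner_step_def)
    with False assms show ?thesis
      by (auto simp: Cons.IH)
  qed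
qed simp

(* The inner loops of round i read only vertices (k, j - 1) with k \<noteq> i and write only vertices
   (i, j), so every read sees the state at the start of the round. *)
lemma foldl_inner_loops:
  assumes "\<forall>j\<in>set js. 1 \<le> j" and "i \<notin> set ks"
  shows "foldl (\<lambda>st j. foldl (inner_step L S eps i j) st ks) (V, E, c) js =
    (V \<union> {(i, j) | j. j \<in> set js \<and> (\<exists>k\<in>set ks. (k, j - 1) \<in> V \<and> step_match L S eps k i j)},
     E \<union> {((i, j), (k, j - 1)) | j k. j \<in> set js \<and> k \<in> set ks \<and> (k, j - 1) \<in> V \<and>
        step_match L S eps k i j},
     c + length js * length ks)"
  using assms(1)
proof (induction js arbitrary: V E c)
  case (Cons j js)
  have "(k, j') \<in> insert (i, j) V \<longleftrightarrow> (k, j') \<in> V" if "k \<in> set ks" for k j'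
    using assms(2) that by auto
  then show ?case
    using Cons by (simp add: foldl_inner_step) blast
qed simp

lemma partial_match_iff:
  "partial_match L S n eps i j \<longleftrightarrow>
     (j = 1 \<and> 1 \<le> i \<and> base (L i) = base (S 1)) \<or>
     (2 \<le> j \<and> j \<le> n \<and> (\<exists>k\<in>{1..<i}. partial_match L S n eps k (j - 1) \<and> step_match L S eps k i j))"
  by (subst partial_match.simps) (fastforce dest: partial_match_pos)

lemma outer_step_round:
  assumes "1 \<le> i"
  shows "outer_step L S n eps ({(k, j). k < i \<and> partial_match L S n eps k j}, E, c) i =
    ({(k, j). k \<le> i \<and> partial_match L S n eps k j},
     E \<union> {((i, j), (k, j - 1)) | j k. 2 \<le> j \<and> j \<le> n \<and> k < i \<and>
        partial_match L S n eps k (j - 1) \<and> step_match L S eps k i j},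
     c + 1 + (n - 1) * (i - 1))"
proof -
  define V1 where "V1 = (if base (L i) = base (S 1)
    then insert (i, 1) {(k, j). k < i \<and> partial_match L S n eps k j}
    else {(k, j). k < i \<and> partial_match L S n eps k j})"
  have step: "outer_step L S n eps ({(k, j). k < i \<and> partial_match L S n eps k j}, E, c) i =
      foldl (\<lambda>st j. foldl (inner_step L S eps i j) st [1..<i]) (V1, E, Suc c) [2..<Suc n]"
    by (simp add: outer_step_def V1_def)
  have js: "\<forall>j\<in>set [2..<Suc n]. 1 \<le> j" and ks: "i \<notin> set [1..<i]"
    by auto
  have reads: "(k, j) \<in> V1 \<longleftrightarrow> partial_match L S n eps k j" if "k < i" for k j
    using that by (simp add: V1_def)
  have V: "V1 \<union> {(i, j) | j. j \<in> set [2..<Suc n] \<and>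
        (\<exists>k\<in>set [1..<i]. (k, j - 1) \<in> V1 \<and> step_match L S eps k i j)} =
      {(k, j). k \<le> i \<and> partial_match L S n eps k j}" (is "?new = ?all")
  proof (rule set_eqI, clarify)
    fix k j
    consider "k < i" | "k = i" | "i < k"
      by linarith
    then show "(k, j) \<in> ?new \<longleftrightarrow> (k, j) \<in> ?all"
    proof cases
      case 2
      then show ?thesis
        using assms by (auto simp: V1_def partial_match_iff[of L S n eps i j] dest: partial_match_pos)
    qed (auto simp: reads V1_def)
  qed
  have E: "{((i, j), (k, j - 1)) | j k. j \<in> set [2..<Suc n] \<and> k \<in> set [1..<i] \<and>
        (k, j - 1) \<in> V1 \<and> step_match L S eps k i j} =
      {((i, j), (k, j - 1)) | j k. 2 \<le> j \<and> j \<le> n \<and> k < i \<and>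
        partial_match L S n eps k (j - 1) \<and> step_match L S eps k i j}"
    by (fastforce simp: reads dest: partial_match_pos)
  show ?thesis
    unfolding step foldl_inner_loops[OF js ks] V E by simp arith
qed

lemma foldl_outer_step:
  "foldl (outer_step L S n eps) ({}, {}, 0) [1..<Suc t] =
    ({(i, j). i \<le> t \<and> partial_match L S n eps i j},
     {((i, j), (k, j - 1)) | i j k. i \<le> t \<and> 2 \<le> j \<and> j \<le> n \<and> k < i \<and>
        partial_match L S n eps k (j - 1) \<and> step_match L S eps k i j},
     \<Sum>i<t. 1 + (n - 1) * i)"
proof (induction t)
  case 0
  show ?case
    by (auto dest: partial_match_pos)
next
  case (Suc t)
  have rows: "{(i, j). i \<le> t \<and> partial_match L S n eps i j} =
      {(i, j). i < Suc t \<and> partial_match L S n eps i j}"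
    by auto
  have "foldl (outer_step L S n eps) ({}, {}, 0) [1..<Suc (Suc t)] =
      outer_step L S n eps (foldl (outer_step L S n eps) ({}, {}, 0) [1..<Suc t]) (Suc t)"
    by simp
  also have "\<dots> = ({(i, j). i \<le> Suc t \<and> partial_match L S n eps i j},
     {((i, j), (k, j - 1)) | i j k. i \<le> t \<and> 2 \<le> j \<and> j \<le> n \<and> k < i \<and>
        partial_match L S n eps k (j - 1) \<and> step_match L S eps k i j} \<union>
     {((Suc t, j), (k, j - 1)) | j k. 2 \<le> j \<and> j \<le> n \<and> k < Suc t \<and>
        partial_match L S n eps k (j - 1) \<and> step_match L S eps k (Suc t) j},
     (\<Sum>i<t. 1 + (n - 1) * i) + 1 + (n - 1) * t)"
    unfolding Suc.IH rows by (subst outer_step_round) simp_all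
  also have "\<dots> = ({(i, j). i \<le> Suc t \<and> partial_match L S n eps i j},
     {((i, j), (k, j - 1)) | i j k. i \<le> Suc t \<and> 2 \<le> j \<and> j \<le> n \<and> k < i \<and>
        partial_match L S n eps k (j - 1) \<and> step_match L S eps k i j},
     \<Sum>i<Suc t. 1 + (n - 1) * i)"
    by (auto simp: le_Suc_eq)
  finally show ?case .
qed

lemma sigMatch_V_iff:
  "(i, j) \<in> sigMatch_V L m S n eps \<longleftrightarrow> i \<le> m \<and> partial_match L S n eps i j"
  unfolding sigMatch_V_def sigMatch_run_def foldl_outer_step by simp

lemma sigMatch_E_iff:
  "((i, Suc j), (k, j)) \<in> sigMatch_E L m S n eps \<longleftrightarrow>
    i \<le> m \<and> 1 \<le> j \<and> Suc j \<le> n \<and> k < i \<and> partial_match L S n eps k j \<and>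
    delta_valid (eps j) (L k) (L i) (S j) (S (Suc j))"
  unfolding sigMatch_E_def sigMatch_run_def foldl_outer_step by auto

lemma sigMatch_cost_eq: "sigMatch_cost L m S n eps = (\<Sum>i<m. 1 + (n - 1) * i)"
  unfolding sigMatch_cost_def sigMatch_run_def foldl_outer_step by simp

lemma sigMatch_cost_le:
  assumes "1 \<le> n"
  shows "sigMatch_cost L m S n eps \<le> m\<^sup>2 * n"
proof -
  have "1 + (n - 1) * i \<le> m * n" if "i < m" for i
  proof -
    have "1 + (n - 1) * i \<le> Suc i * n"
      using assms by (cases n) auto
    also have "\<dots> \<le> m * n"
      using that by (intro mult_le_mono1) simp
    finally show ?thesis .
  qed
  then have "(\<Sum>i<m. 1 + (n - 1) * i) \<le> (\<Sum>i<m. m * n)"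
    by (intro sum_mono) simp
  then show ?thesis
    by (simp add: sigMatch_cost_eq power2_eq_square)
qed

lemma match_path_nth: "i < n \<Longrightarrow> match_path l n ! i = (l (n - i), n - i)"
  by (simp add: match_path_def rev_nth Suc_diff_Suc del: upt_Suc)

lemma is_dpath_match_path:
  assumes "1 \<le> n"
  shows "is_dpath V E (match_path l n) \<longleftrightarrow>
    (\<forall>j\<in>{1..n}. (l j, j) \<in> V) \<and> (\<forall>j\<in>{1..<n}. ((l (Suc j), Suc j), (l j, j)) \<in> E)"
proof -
  have vertices: "set (match_path l n) = (\<lambda>j. (l j, j)) ` {1..n}"
    by (auto simp: match_path_def)
  have steps: "(match_path l n ! i, match_path l n ! Suc i) =
      ((l (Suc (n - Suc i)), Suc (n - Suc i)), (l (n - Suc i), n - Suc i))" if "Suc i < n" for i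
    using that by (simp add: match_path_nth Suc_diff_Suc)
  have reindex: "(\<forall>i. Suc i < n \<longrightarrow> P (n - Suc i)) \<longleftrightarrow> (\<forall>j\<in>{1..<n}. P j)" for P
  proof (intro iffI ballI)
    fix j
    assume "\<forall>i. Suc i < n \<longrightarrow> P (n - Suc i)" and "j \<in> {1..<n}"
    moreover from \<open>j \<in> {1..<n}\<close> have "Suc (n - Suc j) < n" and "n - Suc (n - Suc j) = j"
      by auto
    ultimately show "P j"
      by metis
  qed auto
  have "length (match_path l n) = n"
    by (simp add: match_path_def)
  then show ?thesis
    using assms steps reindex[of "\<lambda>j. ((l (Suc j), Suc j), (l j, j)) \<in> E"]
    by (auto simp: is_dpath_def vertices)
qed

lemma partial_match_of_eps_valid_match:
  assumes match: "eps_valid_match L m S n eps l" and "2 \<le> n"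
  shows "1 \<le> j \<Longrightarrow> j \<le> n \<Longrightarrow> partial_match L S n eps (l j) j"
proof (induction j rule: dec_induct)
  case base
  have "1 \<le> l 1" and "base (L (l 1)) = base (S 1)"
    using match assms(2) by (auto simp: eps_valid_match_def pair_valid_match_def delta_valid_def)
  then show ?case
    by (rule start)
next
  case (step j)
  then show ?case
    using match by (auto simp: eps_valid_match_def pair_valid_match_def intro: extend)
qed

(* For n = 1 the equivalence fails: an eps-valid match then puts no condition on the base
   packet of p_{l[1]}, whereas the vertex v_{l[1],1} requires it to equal that of q_1. *)
lemma eps_valid_match_iff_is_dpath:
  assumes "2 \<le> n"
  shows "eps_valid_match L m S n eps l \<longleftrightarrow>
    is_dpath (sigMatch_V L m S n eps) (sigMatch_E L m S n eps) (match_path l n)"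
proof
  assume match: "eps_valid_match L m S n eps l"
  have "partial_match L S n eps (l j) j" if "j \<in> {1..n}" for j
    using partial_match_of_eps_valid_match[OF match assms] that by simp
  with match assms show "is_dpath (sigMatch_V L m S n eps) (sigMatch_E L m S n eps) (match_path l n)"
    by (auto simp: is_dpath_match_path sigMatch_V_iff sigMatch_E_iff eps_valid_match_def
        pair_valid_match_def)
next
  assume "is_dpath (sigMatch_V L m S n eps) (sigMatch_E L m S n eps) (match_path l n)"
  with assms show "eps_valid_match L m S n eps l"
    by (fastforce simp: is_dpath_match_path sigMatch_V_iff sigMatch_E_iff eps_valid_match_def
        pair_valid_match_def dest: partial_match_pos)
qed

theorem theorem1:
  fixes L S :: "nat \<Rightarrow> 'b packet" and m n :: nat and eps :: "nat \<Rightarrow> real"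
  assumes "is_seq L m" and "is_seq S n" and "2 \<le> n"
    and "\<forall>j. 1 \<le> j \<and> j < n \<longrightarrow> eps j > 0"
  shows "(\<exists>C::nat. \<forall>(L'::nat \<Rightarrow> 'b packet) m' (S'::nat \<Rightarrow> 'b packet) n' (eps'::nat \<Rightarrow> real).
            is_seq L' m' \<and> is_seq S' n' \<and> 1 \<le> n' \<and> (\<forall>j. 1 \<le> j \<and> j < n' \<longrightarrow> eps' j > 0) \<longrightarrow>
            sigMatch_cost L' m' S' n' eps' \<le> C * (m'^2 * n'))
    \<and> (\<forall>l. eps_valid_match L m S n eps l \<longrightarrow>
          is_dpath (sigMatch_V L m S n eps) (sigMatch_E L m S n eps) (match_path l n)
          \<and> (\<forall>j. 1 \<le> j \<and> j < n \<longrightarrow> l j < l (Suc j)))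
    \<and> (\<forall>l. is_dpath (sigMatch_V L m S n eps) (sigMatch_E L m S n eps) (match_path l n) \<longrightarrow>
          eps_valid_match L m S n eps l
          \<and> (\<forall>j. 1 \<le> j \<and> j < n \<longrightarrow> l j < l (Suc j)))"
proof (intro conjI)
  show "\<exists>C::nat. \<forall>(L'::nat \<Rightarrow> 'b packet) m' (S'::nat \<Rightarrow> 'b packet) n' (eps'::nat \<Rightarrow> real).
      is_seq L' m' \<and> is_seq S' n' \<and> 1 \<le> n' \<and> (\<forall>j. 1 \<le> j \<and> j < n' \<longrightarrow> eps' j > 0) \<longrightarrow>
      sigMatch_cost L' m' S' n' eps' \<le> C * (m'^2 * n')"
    by (intro exI[of _ 1] allI impI) (simp add: sigMatch_cost_le)
  have increasing: "\<forall>j. 1 \<le> j \<and> j < n \<longrightarrow> l j < l (Suc j)"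
    if "eps_valid_match L m S n eps l" for l
    using that by (simp add: eps_valid_match_def)
  then show "\<forall>l. eps_valid_match L m S n eps l \<longrightarrow>
      is_dpath (sigMatch_V L m S n eps) (sigMatch_E L m S n eps) (match_path l n)
      \<and> (\<forall>j. 1 \<le> j \<and> j < n \<longrightarrow> l j < l (Suc j))"
    and "\<forall>l. is_dpath (sigMatch_V L m S n eps) (sigMatch_E L m S n eps) (match_path l n) \<longrightarrow>
      eps_valid_match L m S n eps l
      \<and> (\<forall>j. 1 \<le> j \<and> j < n \<longrightarrow> l j < l (Suc j))"
    using eps_valid_match_iff_is_dpath[OF \<open>2 \<le> n\<close>] by blast+
qed

end
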